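(* Let $M$ be a positive integer, let $\{\alpha_i\}_{i=0}^{M}$ be a log-concave sequence of non-negative real numbers, and let $g(x)=\sum_{i=0}^{M}\alpha_{i}\binom{M}{i}(1-x)^{i}x^{M-i}$. Then for every $x\in(0,1)$, \[ \frac{M-1}{M}\,g'(x)^{2}\;\ge\; g(x)\,g''(x). \]
   Context: A non-negative sequence $\{a_i\}_{i=0}^{n}$ is called log-concave if, for indices $i,j$ with $i+j$ held fixed, the product $a_ia_j$ is a non-increasing function of $|i-j|$. $\binom{M}{i}$ is the ordinary binomial coefficient. *)

theory Defs
  imports "HOL-Analysis.Analysis"
begin

definition log_concave_seq :: "nat \<Rightarrow> (nat \<Rightarrow> real) \<Rightarrow> bool" where
  "log_concave_seq n a \<longleftrightarrow>
     (\<forall>i\<le>n. a i \<ge> 0) \<and>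
     (\<forall>i j k l. i \<le> n \<longrightarrow> j \<le> n \<longrightarrow> k \<le> n \<longrightarrow> l \<le> n \<longrightarrow> i + j = k + l \<longrightarrow>
        \<bar>int i - int j\<bar> \<le> \<bar>int k - int l\<bar> \<longrightarrow> a k * a l \<le> a i * a j)"

end

theory Submission
  imports Defs
begin

text \<open>
  Write u = 1 - x, v = x, c_i = \<alpha>_i (M choose i) and T_i = u^i v^(M-i), so g(x) = \<Sum> c_i T_i.
  At an interior point x one has g' = \<Sum> c_i T_i P_i / (uv) and g'' = \<Sum> c_i T_i Q_i / (uv)^2,
  where P_i (the slope) and Q_i (the curvature) are explicit quadratics in u, v.  The claim is then
  equivalent to (M-1)(\<Sum> c_i T_i P_i)^2 - M (\<Sum> c_i T_i)(\<Sum> c_i T_i Q_i) \<ge> 0.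

  Symmetrising this quadratic form in (i, j) and collecting the terms with i + j = n, it becomes
  (1/4) \<Sum>_n u^n v^(2M-n) S_n with S_n = \<Sum>_{i \<le> n} c_i c_(n-i) K_n(i), where
  K_n(i) = n(2M-n) - (2M-1)(2i-n)^2 is the "balance kernel".  Two facts give S_n \<ge> 0:
  (1) the kernel has mean zero against the weights (M choose i)(M choose (n-i)), a consequence of
      Vandermonde's identity; and
  (2) log-concavity makes \<alpha>_i \<alpha>_(n-i) decrease, like K_n(i), as i moves away from n/2,
      so Chebyshev's sum inequality applies.
\<close>

lemma absorption_choose: "(k + 1) * (M choose (k + 1)) = M * ((M - 1) choose k)"
  using times_binomial_minus1_eq[of "k + 1" M] by simp

text \<open>A weighted Vandermonde convolution: absorbing the factors i and m+2-i into the
  binomials reduces it to the ordinary convolution for M - 1.\<close>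
lemma weighted_vandermonde:
  fixes M m :: nat
  shows "(\<Sum>i\<le>m+2. i * (m+2-i) * ((M choose i) * (M choose (m+2-i)))) = M * M * ((2*M-2) choose m)"
proof -
  define f where "f i = i * (m+2-i) * ((M choose i) * (M choose (m+2-i)))" for i
  have "(\<Sum>i\<le>m+2. f i) = f 0 + (\<Sum>k\<le>m+1. f (Suc k))"
    using sum.atMost_Suc_shift[of f "m+1"] by simp
  also have "\<dots> = (\<Sum>k\<le>m. f (Suc k))" by (simp add: f_def)
  also have "\<dots> = (\<Sum>k\<le>m. M * M * (((M-1) choose k) * ((M-1) choose (m-k))))"
  proof (rule sum.cong[OF refl])
    fix k assume "k \<in> {..m}"
    then have "m + 2 - Suc k = (m - k) + 1" by simp
    then have "f (Suc k) = ((k+1) * (M choose (k+1))) * (((m-k)+1) * (M choose ((m-k)+1)))"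
      unfolding f_def by (simp add: algebra_simps)
    then show "f (Suc k) = M * M * (((M-1) choose k) * ((M-1) choose (m-k)))"
      by (simp only: absorption_choose) (simp add: ac_simps)
  qed
  also have "\<dots> = M * M * ((M-1 + (M-1)) choose m)"
    by (simp add: sum_distrib_left[symmetric] vandermonde)
  also have "M-1 + (M-1) = 2*M-2" by simp
  finally show ?thesis by (simp add: f_def)
qed

text \<open>Absorption applied twice to the central binomial row 2M.\<close>
lemma choose_shift_two: "(m+2) * (m+1) * ((2*M) choose (m+2)) = 2*M * (2*M-1) * ((2*M-2) choose m)"
proof -
  have "(m+2) * ((2*M) choose (m+2)) = 2*M * ((2*M-1) choose (m+1))"
    using times_binomial_minus1_eq[of "m+2" "2*M"] by simp
  moreover have "(m+1) * ((2*M-1) choose (m+1)) = (2*M-1) * ((2*M-1-1) choose (m+1-1))"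
    by (rule times_binomial_minus1_eq) simp
  moreover have "2*M-1-1 = 2*M-2" by simp
  ultimately have "(m+1) * ((m+2) * ((2*M) choose (m+2))) = 2*M * ((2*M-1) * ((2*M-2) choose m))"
    by (metis add_diff_cancel_right' mult.left_commute)
  then show ?thesis by (metis mult.assoc mult.commute)
qed

lemma pair_count_identity:
  fixes M n :: nat
  shows "2 * (2*M-1) * (\<Sum>i\<le>n. i * (n-i) * ((M choose i) * (M choose (n-i))))
           = M * (n * (n-1) * ((2*M) choose n))"
proof (cases "n < 2")
  case True
  then have "\<And>i. i \<le> n \<Longrightarrow> i * (n-i) = 0" and "n * (n-1) = 0" by auto
  then show ?thesis by (simp add: sum.neutral)
next
  case False
  then obtain m where n: "n = m + 2" by (metis add.commute le_Suc_ex not_less)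
  have "n * (n-1) * ((2*M) choose n) = 2*M * (2*M-1) * ((2*M-2) choose m)"
    using choose_shift_two[of m M] by (simp add: n)
  then show ?thesis unfolding n weighted_vandermonde by (simp add: ac_simps)
qed

text \<open>The kernel K_n(i) weighting the pair (i, n-i) after the quadratic form is regrouped
  along antidiagonals i + j = n.  It is largest for i near n/2.\<close>
definition balance_kernel :: "nat \<Rightarrow> nat \<Rightarrow> nat \<Rightarrow> real" where
  "balance_kernel M n i = real n * (2 * real M - real n) - (2 * real M - 1) * (2 * real i - real n)^2"

lemma vandermonde_real:
  "(\<Sum>i\<le>n. real (M choose i) * real (M choose (n-i))) = real ((2*M) choose n)"
proof -
  have "real (\<Sum>i\<le>n. (M choose i) * (M choose (n-i))) = real ((M+M) choose n)"
    by (simp only: vandermonde)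
  then show ?thesis by (simp add: mult_2)
qed

text \<open>The kernel has mean zero against the Vandermonde weights (M choose i)(M choose (n-i)):
  expand (2i-n)^2 = n^2 - 4i(n-i) and use the two previous identities.\<close>
lemma balance_kernel_mean_zero:
  assumes "M \<ge> 1"
  shows "(\<Sum>i\<le>n. real (M choose i) * real (M choose (n-i)) * balance_kernel M n i) = 0"
proof -
  define B where "B i = real (M choose i) * real (M choose (n-i))" for i
  define S where "S = real (\<Sum>i\<le>n. i * (n-i) * ((M choose i) * (M choose (n-i))))"
  have S_eq: "2 * (2 * real M - 1) * S = real M * real n * (real n - 1) * real ((2*M) choose n)"
  proof -
    have "real (2 * (2*M-1) * (\<Sum>i\<le>n. i * (n-i) * ((M choose i) * (M choose (n-i)))))
            = real (M * (n * (n-1) * ((2*M) choose n)))"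
      by (simp only: pair_count_identity)
    then have "real (2 * (2*M-1)) * S = real M * (real n * real (n-1) * real ((2*M) choose n))"
      unfolding S_def by (simp only: of_nat_mult)
    moreover have "real (2 * (2*M-1)) = 2 * (2 * real M - 1)" using assms by (simp add: of_nat_diff)
    moreover have "real n * real (n-1) = real n * (real n - 1)" by (cases n) auto
    ultimately show ?thesis by (metis mult.assoc)
  qed
  have "(\<Sum>i\<le>n. B i * balance_kernel M n i)
      = (\<Sum>i\<le>n. B i * (real n * (2 * real M - real n) - (2 * real M - 1) * (real n)^2)
                  + 4 * (2 * real M - 1) * (real (i * (n-i)) * B i))"
  proof (rule sum.cong[OF refl])
    fix i assume "i \<in> {..n}"
    then have "real (n-i) = real n - real i" by simp
    then show "B i * balance_kernel M n i = B i * (real n * (2 * real M - real n) - (2 * real M - 1) * (real n)^2)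
                  + 4 * (2 * real M - 1) * (real (i * (n-i)) * B i)"
      by (simp add: balance_kernel_def power2_eq_square algebra_simps)
  qed
  also have "\<dots> = real ((2*M) choose n) * (real n * (2 * real M - real n) - (2 * real M - 1) * (real n)^2)
                  + 4 * (2 * real M - 1) * S"
  proof -
    have "(\<Sum>i\<le>n. B i * (real n * (2 * real M - real n) - (2 * real M - 1) * (real n)^2))
        = real ((2*M) choose n) * (real n * (2 * real M - real n) - (2 * real M - 1) * (real n)^2)"
      by (simp add: B_def vandermonde_real flip: sum_distrib_right)
    moreover have "(\<Sum>i\<le>n. 4 * (2 * real M - 1) * (real (i * (n-i)) * B i)) = 4 * (2 * real M - 1) * S"
      by (simp add: S_def B_def sum_distrib_left mult.assoc)
    ultimately show ?thesis by (simp only: sum.distrib)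
  qed
  also have "\<dots> = 0"
    using S_eq by (simp add: power2_eq_square algebra_simps)
  finally show ?thesis by (simp add: B_def)
qed

lemma chebyshev_identity:
  fixes B W K :: "'a \<Rightarrow> real"
  shows "(\<Sum>i\<in>I. \<Sum>k\<in>I. B i * B k * ((W i - W k) * (K i - K k)))
           = 2 * ((\<Sum>i\<in>I. B i) * (\<Sum>i\<in>I. B i * W i * K i) - (\<Sum>i\<in>I. B i * W i) * (\<Sum>i\<in>I. B i * K i))"
proof -
  have "(\<Sum>i\<in>I. \<Sum>k\<in>I. B i * B k * ((W i - W k) * (K i - K k)))
     = (\<Sum>i\<in>I. \<Sum>k\<in>I. (B i * W i * K i) * B k + B i * (B k * W k * K k)
                         - (B i * W i) * (B k * K k) - (B i * K i) * (B k * W k))"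
    by (intro sum.cong refl) (simp add: algebra_simps)
  also have "\<dots> = (\<Sum>i\<in>I. B i * W i * K i) * (\<Sum>k\<in>I. B k) + (\<Sum>i\<in>I. B i) * (\<Sum>k\<in>I. B k * W k * K k)
                 - (\<Sum>i\<in>I. B i * W i) * (\<Sum>k\<in>I. B k * K k) - (\<Sum>i\<in>I. B i * K i) * (\<Sum>k\<in>I. B k * W k)"
    by (simp add: sum.distrib sum_subtractf sum_product)
  finally show ?thesis by (simp add: algebra_simps)
qed

lemma chebyshev_sum_inequality:
  fixes B W K :: "'a \<Rightarrow> real"
  assumes B_nonneg: "\<And>i. i \<in> I \<Longrightarrow> 0 \<le> B i"
    and similarly_ordered: "\<And>i k. i \<in> I \<Longrightarrow> k \<in> I \<Longrightarrow> B i \<noteq> 0 \<Longrightarrow> B k \<noteq> 0 \<Longrightarrow>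
                              0 \<le> (W i - W k) * (K i - K k)"
  shows "(\<Sum>i\<in>I. B i * W i) * (\<Sum>i\<in>I. B i * K i) \<le> (\<Sum>i\<in>I. B i) * (\<Sum>i\<in>I. B i * W i * K i)"
proof -
  have "0 \<le> B i * B k * ((W i - W k) * (K i - K k))" if "i \<in> I" "k \<in> I" for i k
    using B_nonneg[OF that(1)] B_nonneg[OF that(2)] similarly_ordered[OF that]
    by (cases "B i = 0 \<or> B k = 0") auto
  then have "0 \<le> (\<Sum>i\<in>I. \<Sum>k\<in>I. B i * B k * ((W i - W k) * (K i - K k)))"
    by (intro sum_nonneg) auto
  then show ?thesis unfolding chebyshev_identity by simp
qed

lemma log_concave_antidiagonal_mono:
  assumes lc: "log_concave_seq M \<alpha>"
    and "i \<le> n" "k \<le> n" "i \<le> M" "n - i \<le> M" "k \<le> M" "n - k \<le> M"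
    and closer: "\<bar>2 * real i - real n\<bar> \<le> \<bar>2 * real k - real n\<bar>"
  shows "\<alpha> k * \<alpha> (n-k) \<le> \<alpha> i * \<alpha> (n-i)"
proof -
  have "real_of_int \<bar>int i - int (n-i)\<bar> \<le> real_of_int \<bar>int k - int (n-k)\<bar>"
    using closer assms(2,3) by (simp add: of_nat_diff)
  then have "\<bar>int i - int (n-i)\<bar> \<le> \<bar>int k - int (n-k)\<bar>" by linarith
  moreover have "i + (n-i) = k + (n-k)" using assms(2,3) by simp
  ultimately show ?thesis using lc assms(4-7) unfolding log_concave_seq_def by blast
qed

lemma balance_kernel_mono:
  assumes "M \<ge> 1" and "\<bar>2 * real i - real n\<bar> \<le> \<bar>2 * real k - real n\<bar>"
  shows "balance_kernel M n k \<le> balance_kernel M n i"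
proof -
  have "(2 * real i - real n)^2 \<le> (2 * real k - real n)^2"
    using assms(2) by (metis abs_ge_zero power2_abs power_mono)
  moreover have "0 \<le> 2 * real M - 1" using assms(1) by simp
  ultimately show ?thesis unfolding balance_kernel_def by (simp add: mult_left_mono)
qed

text \<open>The antidiagonal sums S_n are nonnegative: by Chebyshev's inequality, S_n times the total
  weight (2M choose n) dominates the product of the weighted means, and the kernel mean vanishes.\<close>
lemma antidiagonal_sum_nonneg:
  assumes lc: "log_concave_seq M \<alpha>" and "M \<ge> 1" and "n \<le> 2*M"
  shows "0 \<le> (\<Sum>i\<le>n. (\<alpha> i * real (M choose i)) * (\<alpha> (n-i) * real (M choose (n-i))) * balance_kernel M n i)"
proof -
  define B where "B i = real (M choose i) * real (M choose (n-i))" for i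
  define W where "W i = \<alpha> i * \<alpha> (n-i)" for i
  define K where "K = balance_kernel M n"
  have in_range: "i \<le> M \<and> n - i \<le> M" if "B i \<noteq> 0" for i
    using that unfolding B_def by (auto simp: binomial_eq_0_iff)
  have ordered: "0 \<le> (W i - W k) * (K i - K k)" if "i \<le> n" "k \<le> n" "B i \<noteq> 0" "B k \<noteq> 0" for i k
  proof (cases "\<bar>2 * real i - real n\<bar> \<le> \<bar>2 * real k - real n\<bar>")
    case True
    then have "W k \<le> W i" "K k \<le> K i"
      using log_concave_antidiagonal_mono[OF lc] balance_kernel_mono[OF assms(2)] in_range that
      unfolding W_def K_def by auto
    then show ?thesis by simp
  next
    case False
    then have "W i \<le> W k" "K i \<le> K k"
      using log_concave_antidiagonal_mono[OF lc] balance_kernel_mono[OF assms(2)] in_range that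
      unfolding W_def K_def by auto
    then show ?thesis by (simp add: mult_nonpos_nonpos)
  qed
  have "(\<Sum>i\<le>n. B i * W i) * (\<Sum>i\<le>n. B i * K i) \<le> (\<Sum>i\<le>n. B i) * (\<Sum>i\<le>n. B i * W i * K i)"
    by (rule chebyshev_sum_inequality) (auto simp: B_def ordered)
  moreover have "(\<Sum>i\<le>n. B i * K i) = 0"
    using balance_kernel_mean_zero[OF assms(2)] by (simp add: B_def K_def)
  moreover have "(\<Sum>i\<le>n. B i) = real ((2*M) choose n)" "0 < real ((2*M) choose n)"
    using assms(3) by (simp_all add: B_def vandermonde_real)
  ultimately have "0 \<le> (\<Sum>i\<le>n. B i * W i * K i)" by (simp add: zero_le_mult_iff)
  also have "\<dots> = (\<Sum>i\<le>n. (\<alpha> i * real (M choose i)) * (\<alpha> (n-i) * real (M choose (n-i))) * balance_kernel M n i)"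
    by (simp add: B_def W_def K_def algebra_simps)
  finally show ?thesis .
qed

lemma quadratic_form_symmetrize:
  fixes a P Q :: "'a \<Rightarrow> real" and s t :: real
  shows "s * (\<Sum>i\<in>I. a i * P i)^2 - t * (\<Sum>i\<in>I. a i) * (\<Sum>i\<in>I. a i * Q i)
           = (\<Sum>i\<in>I. \<Sum>j\<in>I. a i * a j * (s * P i * P j - t * (Q i + Q j) / 2))"
proof -
  have "(\<Sum>i\<in>I. \<Sum>j\<in>I. a i * a j * (s * P i * P j - t * (Q i + Q j) / 2))
      = (\<Sum>i\<in>I. \<Sum>j\<in>I. s * ((a i * P i) * (a j * P j)) - t / 2 * ((a i * Q i) * a j) - t / 2 * (a i * (a j * Q j)))"
    by (intro sum.cong refl) (simp add: algebra_simps add_divide_distrib)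
  also have "\<dots> = s * (\<Sum>i\<in>I. a i * P i)^2 - t / 2 * ((\<Sum>i\<in>I. a i * Q i) * (\<Sum>i\<in>I. a i))
                   - t / 2 * ((\<Sum>i\<in>I. a i) * (\<Sum>i\<in>I. a i * Q i))"
    by (simp only: sum_subtractf sum_distrib_left[symmetric] sum_product power2_eq_square)
  finally show ?thesis by (simp add: algebra_simps)
qed

lemma square_sum_by_antidiagonals:
  fixes F :: "nat \<Rightarrow> nat \<Rightarrow> 'a::comm_monoid_add"
  assumes "\<And>i j. N < i \<or> N < j \<Longrightarrow> F i j = 0"
  shows "(\<Sum>i\<le>N. \<Sum>j\<le>N. F i j) = (\<Sum>n\<le>2*N. \<Sum>i\<le>n. F i (n-i))"
proof -
  have "(\<Sum>i\<le>N. \<Sum>j\<le>N. F i j) = (\<Sum>(i,j)\<in>{..N}\<times>{..N}. F i j)"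
    by (simp add: sum.cartesian_product)
  also have "\<dots> = (\<Sum>(i,j)\<in>{(i,j). i+j \<le> 2*N}. F i j)"
  proof (rule sum.mono_neutral_left)
    show "finite {(i, j). i + j \<le> 2*N}"
      by (rule finite_subset[of _ "{..2*N}\<times>{..2*N}"]) auto
    show "\<forall>p\<in>{(i,j). i+j \<le> 2*N} - {..N}\<times>{..N}. (case p of (i,j) \<Rightarrow> F i j) = 0"
    proof
      fix p assume "p \<in> {(i,j). i+j \<le> 2*N} - {..N}\<times>{..N}"
      then obtain i j where "p = (i, j)" and "N < i \<or> N < j" by fastforce
      then show "(case p of (i,j) \<Rightarrow> F i j) = 0" using assms by simp
    qed
  qed auto
  also have "\<dots> = (\<Sum>n\<le>2*N. \<Sum>i\<le>n. F i (n-i))"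
    by (rule sum.triangle_reindex_eq)
  finally show ?thesis .
qed

text \<open>The slope P_i: the derivative of T_i = u^i v^(M-i) (with u = 1 - x, v = x) is T_i P_i / (uv).\<close>
definition bern_slope :: "nat \<Rightarrow> real \<Rightarrow> real \<Rightarrow> nat \<Rightarrow> real" where
  "bern_slope M u v i = (real M - real i) * u - real i * v"

text \<open>The curvature Q_i: the second derivative of T_i is T_i Q_i / (uv)^2.\<close>
definition bern_curvature :: "nat \<Rightarrow> real \<Rightarrow> real \<Rightarrow> nat \<Rightarrow> real" where
  "bern_curvature M u v i = real i * (real i - 1) * v^2 - 2 * real i * (real M - real i) * u * v
                              + (real M - real i) * (real M - real i - 1) * u^2"

lemma slope_curvature_kernel:
  "(real M - 1) * bern_slope M u v i * bern_slope M u v j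
     - real M * (bern_curvature M u v i + bern_curvature M u v j) / 2
   = (u + v)^2 / 4 * balance_kernel M (i + j) i"
  unfolding bern_slope_def bern_curvature_def balance_kernel_def
  by (simp add: power2_eq_square field_simps)

text \<open>The central inequality (M-1)(\<Sum> a_i P_i)^2 \<ge> M (\<Sum> a_i)(\<Sum> a_i Q_i) with a_i = c_i T_i:
  symmetrise, identify the pair terms with the kernel, regroup along antidiagonals and use S_n \<ge> 0.\<close>
lemma bernstein_quadratic_form_nonneg:
  fixes u v :: real
  assumes "0 \<le> u" "0 \<le> v" "M \<ge> 1" and lc: "log_concave_seq M \<alpha>"
  defines "a \<equiv> \<lambda>i. \<alpha> i * real (M choose i) * (u^i * v^(M-i))"
  shows "0 \<le> (real M - 1) * (\<Sum>i\<le>M. a i * bern_slope M u v i)^2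
              - real M * (\<Sum>i\<le>M. a i) * (\<Sum>i\<le>M. a i * bern_curvature M u v i)"
proof -
  define c where "c i = \<alpha> i * real (M choose i)" for i
  define F where "F i j = (u + v)^2 / 4 * (u^(i+j) * v^(2*M-(i+j))) * (c i * c j * balance_kernel M (i+j) i)" for i j
  have "(real M - 1) * (\<Sum>i\<le>M. a i * bern_slope M u v i)^2
          - real M * (\<Sum>i\<le>M. a i) * (\<Sum>i\<le>M. a i * bern_curvature M u v i)
      = (\<Sum>i\<le>M. \<Sum>j\<le>M. a i * a j * ((u + v)^2 / 4 * balance_kernel M (i + j) i))"
    by (simp only: quadratic_form_symmetrize slope_curvature_kernel)
  also have "\<dots> = (\<Sum>i\<le>M. \<Sum>j\<le>M. F i j)"
  proof (intro sum.cong refl)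
    fix i j assume "i \<in> {..M}" "j \<in> {..M}"
    then have "2*M - (i+j) = (M-i) + (M-j)" by auto
    then show "a i * a j * ((u + v)^2 / 4 * balance_kernel M (i + j) i) = F i j"
      unfolding a_def F_def c_def by (simp add: power_add algebra_simps)
  qed
  also have "\<dots> = (\<Sum>n\<le>2*M. \<Sum>i\<le>n. F i (n-i))"
    by (rule square_sum_by_antidiagonals) (auto simp: F_def c_def)
  also have "\<dots> = (\<Sum>n\<le>2*M. (u + v)^2 / 4 * (u^n * v^(2*M-n)) *
                      (\<Sum>i\<le>n. c i * c (n-i) * balance_kernel M n i))"
    by (intro sum.cong refl) (auto simp: F_def sum_distrib_left)
  also have "\<dots> \<ge> 0"
  proof (intro sum_nonneg)
    fix n assume "n \<in> {..2*M}"
    then have "0 \<le> (\<Sum>i\<le>n. c i * c (n-i) * balance_kernel M n i)"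
      unfolding c_def using antidiagonal_sum_nonneg[OF lc assms(3)] by simp
    then show "0 \<le> (u + v)^2 / 4 * (u^n * v^(2*M-n)) * (\<Sum>i\<le>n. c i * c (n-i) * balance_kernel M n i)"
      using assms(1,2) by simp
  qed
  finally show ?thesis .
qed

text \<open>The monomials (1-t)^a t^b of Bernstein form, and their derivative written as a
  polynomial expression, valid at every t (so that it can be differentiated again).\<close>
definition bmono :: "nat \<Rightarrow> nat \<Rightarrow> real \<Rightarrow> real" where
  "bmono a b t = (1 - t)^a * t^b"

definition bmono_deriv :: "nat \<Rightarrow> nat \<Rightarrow> real \<Rightarrow> real" where
  "bmono_deriv a b t = - real a * bmono (a - 1) b t + real b * bmono a (b - 1) t"

lemma bmono_has_derivative: "(bmono a b has_real_derivative bmono_deriv a b t) (at t)"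
  unfolding bmono_def[abs_def] bmono_deriv_def bmono_def
  by (auto intro!: derivative_eq_intros simp: algebra_simps)

lemma bmono_deriv_has_derivative:
  "(bmono_deriv a b has_real_derivative
      - real a * bmono_deriv (a - 1) b t + real b * bmono_deriv a (b - 1) t) (at t)"
proof -
  have "bmono_deriv a b = (\<lambda>t. - real a * bmono (a - 1) b t + real b * bmono a (b - 1) t)"
    by (rule ext) (simp add: bmono_deriv_def)
  then show ?thesis
    by (auto intro!: derivative_eq_intros bmono_has_derivative simp: algebra_simps)
qed

lemma bmono_deriv_interior:
  assumes "0 < t" "t < 1"
  shows "bmono_deriv a b t = (1 - t)^a * t^b * (real b * (1 - t) - real a * t) / ((1 - t) * t)"
  using assms unfolding bmono_deriv_def bmono_def
  by (cases a; cases b) (auto simp: field_simps)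

lemma bmono_second_deriv_interior:
  assumes "0 < t" "t < 1"
  shows "- real a * bmono_deriv (a - 1) b t + real b * bmono_deriv a (b - 1) t
           = (1 - t)^a * t^b * (real a * (real a - 1) * t^2 - 2 * real a * real b * (1 - t) * t
                                + real b * (real b - 1) * (1 - t)^2) / ((1 - t)^2 * t^2)"
proof -
  define u where "u = 1 - t"
  have "0 < u" using assms(2) by (simp add: u_def)
  have first: "bmono_deriv a' b' t = u^a' * t^b' * (real b' * u - real a' * t) / (u * t)" for a' b'
    unfolding u_def by (rule bmono_deriv_interior[OF assms])
  show ?thesis
    unfolding first u_def[symmetric] using \<open>0 < u\<close> assms(1)
    by (cases a; cases b) (auto simp: field_simps power2_eq_square)
qed

lemma bernstein_derivatives:
  fixes c :: "nat \<Rightarrow> real" and g :: "real \<Rightarrow> real"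
  assumes g: "\<And>t. g t = (\<Sum>i\<le>M. c i * (1 - t)^i * t^(M-i))" and x: "0 < x" "x < 1"
  shows "deriv g x = (\<Sum>i\<le>M. c i * ((1 - x)^i * x^(M-i)) * bern_slope M (1 - x) x i) / ((1 - x) * x)"
    and "deriv (deriv g) x
           = (\<Sum>i\<le>M. c i * ((1 - x)^i * x^(M-i)) * bern_curvature M (1 - x) x i) / ((1 - x)^2 * x^2)"
proof -
  define g1 where "g1 t = (\<Sum>i\<le>M. c i * bmono_deriv i (M-i) t)" for t
  have "g = (\<lambda>t. \<Sum>i\<le>M. c i * bmono i (M-i) t)"
    by (rule ext) (simp add: g bmono_def mult.assoc)
  then have "(g has_real_derivative g1 t) (at t)" for t
    unfolding g1_def by (auto intro!: derivative_eq_intros bmono_has_derivative simp: mult.commute)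
  then have deriv_g: "deriv g = g1"
    by (intro ext DERIV_imp_deriv)
  have "(g1 has_real_derivative
          (\<Sum>i\<le>M. c i * (- real i * bmono_deriv (i - 1) (M-i) x + real (M-i) * bmono_deriv i (M-i-1) x))) (at x)"
    unfolding g1_def[abs_def]
    by (auto intro!: derivative_eq_intros bmono_deriv_has_derivative simp: mult.commute)
  then have deriv2_g: "deriv (deriv g) x
      = (\<Sum>i\<le>M. c i * (- real i * bmono_deriv (i - 1) (M-i) x + real (M-i) * bmono_deriv i (M-i-1) x))"
    unfolding deriv_g by (rule DERIV_imp_deriv)
  show "deriv g x = (\<Sum>i\<le>M. c i * ((1 - x)^i * x^(M-i)) * bern_slope M (1 - x) x i) / ((1 - x) * x)"
    unfolding deriv_g g1_def sum_divide_distrib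
  proof (rule sum.cong[OF refl])
    fix i assume "i \<in> {..M}"
    then have "real (M-i) = real M - real i" by (simp add: of_nat_diff)
    then show "c i * bmono_deriv i (M-i) x = c i * ((1 - x)^i * x^(M-i)) * bern_slope M (1 - x) x i / ((1 - x) * x)"
      unfolding bmono_deriv_interior[OF x] bern_slope_def by simp
  qed
  show "deriv (deriv g) x
           = (\<Sum>i\<le>M. c i * ((1 - x)^i * x^(M-i)) * bern_curvature M (1 - x) x i) / ((1 - x)^2 * x^2)"
    unfolding deriv2_g sum_divide_distrib
  proof (rule sum.cong[OF refl])
    fix i assume "i \<in> {..M}"
    then have "real (M-i) = real M - real i" by (simp add: of_nat_diff)
    then show "c i * (- real i * bmono_deriv (i - 1) (M-i) x + real (M-i) * bmono_deriv i (M-i-1) x)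
             = c i * ((1 - x)^i * x^(M-i)) * bern_curvature M (1 - x) x i / ((1 - x)^2 * x^2)"
      unfolding bmono_second_deriv_interior[OF x] bern_curvature_def by simp
  qed
qed

theorem mainTheorem4:
  fixes M :: nat and \<alpha> :: "nat \<Rightarrow> real" and g :: "real \<Rightarrow> real" and x :: real
  assumes "M \<ge> 1"
    and "log_concave_seq M \<alpha>"
    and "\<And>t. g t = (\<Sum>i=0..M. \<alpha> i * real (M choose i) * (1 - t) ^ i * t ^ (M - i))"
    and "0 < x" and "x < 1"
  shows "(real M - 1) / real M * (deriv g x) ^ 2 \<ge> g x * deriv (deriv g) x"
proof -
  define a where "a i = \<alpha> i * real (M choose i) * ((1 - x)^i * x^(M-i))" for i
  define S0 S1 S2 where "S0 = (\<Sum>i\<le>M. a i)"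
    and "S1 = (\<Sum>i\<le>M. a i * bern_slope M (1 - x) x i)"
    and "S2 = (\<Sum>i\<le>M. a i * bern_curvature M (1 - x) x i)"
  have g: "\<And>t. g t = (\<Sum>i\<le>M. \<alpha> i * real (M choose i) * (1 - t)^i * t^(M-i))"
    using assms(3) by (simp add: atLeast0AtMost)
  define d where "d = (1 - x) * x"
  have d: "0 < d" using assms(4,5) by (simp add: d_def)
  have gx: "g x = S0" by (simp add: g S0_def a_def mult.assoc)
  have derivs: "deriv g x = S1 / d" "deriv (deriv g) x = S2 / d^2"
    using bernstein_derivatives[OF g assms(4,5)] by (simp_all add: S1_def S2_def a_def d_def power_mult_distrib)
  have rewrite: "(real M - 1) / real M * (deriv g x)^2 - g x * deriv (deriv g) x
                     = ((real M - 1) * S1^2 - real M * S0 * S2) / (real M * d^2)"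
    unfolding gx derivs using assms(1) d by (simp add: field_simps power2_eq_square)
  have "0 \<le> (real M - 1) * S1^2 - real M * S0 * S2"
    using bernstein_quadratic_form_nonneg[of "1 - x" x M \<alpha>] assms(1,2,4,5)
    unfolding S0_def S1_def S2_def a_def by simp
  then have "0 \<le> ((real M - 1) * S1^2 - real M * S0 * S2) / (real M * d^2)" by simp
  then show ?thesis using rewrite by linarith
qed

end
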